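(* Let $q$ be an odd prime and let $$\Sigma_2:=\sum_{\chi\ne\chi_0}\sum_{p}\sum_{m\ge2}\frac{\chi(p^m)}{m p^m},$$ where $\chi$ runs over the non-principal Dirichlet characters modulo $q$ and $p$ over all primes. Then $$|\Sigma_2|<\mathcal{A}+\frac{\pi^2/6-\mathcal{A}}{q}.$$
   Context: $\chi_0$ is the principal character modulo $q$. $\mathcal{A}:=\sum_{m\ge2}\frac1m\sum_{k=\alpha(m)}^{\beta(m)}\frac1k$ with $\alpha(m)=\frac12(m^2-m)$, $\beta(m)=\frac12(m^2+m)-1$ ($\mathcal{A}\approx1.60009$). *)

theory Defs
  imports "HOL-Analysis.Analysis" "HOL-Computational_Algebra.Primes"
begin

definition dirichlet_character :: "nat \<Rightarrow> (nat \<Rightarrow> complex) \<Rightarrow> bool" where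
  "dirichlet_character q chi \<longleftrightarrow>
     (\<forall>m n. chi (m * n) = chi m * chi n) \<and>
     (\<forall>n. chi (n + q) = chi n) \<and>
     (\<forall>n. chi n = 0 \<longleftrightarrow> \<not> coprime n q)"

definition principal_character :: "nat \<Rightarrow> nat \<Rightarrow> complex" where
  "principal_character q = (\<lambda>n. if coprime n q then 1 else 0)"

definition alpha_idx :: "nat \<Rightarrow> nat" where
  "alpha_idx m = (m^2 - m) div 2"

definition beta_idx :: "nat \<Rightarrow> nat" where
  "beta_idx m = (m^2 + m) div 2 - 1"

definition const_A :: real where
  "const_A = (\<Sum>\<^sub>\<infinity> m\<in>{2::nat..}. (1 / real m) * (\<Sum>k = alpha_idx m..beta_idx m. 1 / real k))"

definition Sigma2 :: "nat \<Rightarrow> complex" where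
  "Sigma2 q = (\<Sum>chi \<in> {chi. dirichlet_character q chi \<and> chi \<noteq> principal_character q}.
      \<Sum>\<^sub>\<infinity> p\<in>{p::nat. prime p}. \<Sum>\<^sub>\<infinity> m\<in>{2::nat..}.
         chi (p ^ m) / (of_nat m * of_nat (p ^ m)))"

end

theory Submission
  imports Defs "HOL-Number_Theory.Number_Theory"
begin

text \<open>
  Both series converge absolutely, so the finite sum over characters can be moved inside; by
  orthogonality (a character sending a primitive root to a primitive \<open>(q - 1)\<close>-th root of unity
  permutes the characters) \<open>\<Sigma>\<^sub>2 = (N - 1) S\<^sub>1 - S\<^sub>3\<close>, where \<open>N \<le> q - 1\<close> is the number of
  characters, \<open>S\<^sub>1\<close> is the sum of \<open>1 / (m p\<^sup>m)\<close> over \<open>p\<^sup>m \<equiv> 1 (mod q)\<close>, \<open>m \<ge> 2\<close>, and \<open>S\<^sub>3\<close> the same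
  sum over the other prime powers coprime to \<open>q\<close>. Both are nonnegative and \<open>S\<^sub>3 \<le> 1/2\<close>.

  In \<open>S\<^sub>1\<close>, primes \<open>p < q\<close> give \<open>p\<^sup>m = 1 + q j\<close> with distinct \<open>j \<ge> 1\<close>, and for each \<open>m\<close> at most \<open>m\<close>
  residues satisfy \<open>x\<^sup>m \<equiv> 1\<close>; placing these \<open>j\<close> as low as possible shows \<open>\<Sum> 1/(m j) \<le> \<A>\<close>, so this
  part is at most \<open>\<A>/q\<close>. Primes \<open>p > q\<close> with \<open>m = 2\<close> satisfy \<open>p \<equiv> \<plusminus>1 (mod q)\<close>, hence \<open>p \<ge> k q\<close>
  for distinct \<open>k\<close>, contributing at most \<open>(\<pi>\<^sup>2/6)/q\<^sup>2\<close>; those with \<open>m \<ge> 3\<close> contribute at most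
  \<open>1/(3 q\<^sup>2)\<close>. Since \<open>\<A> \<ge> 3/4\<close>, the bound follows by arithmetic.
\<close>

section \<open>Dirichlet characters modulo a prime\<close>

lemma dirichlet_character_mult:
  "dirichlet_character q chi \<Longrightarrow> chi (m * n) = chi m * chi n"
  by (simp add: dirichlet_character_def)

lemma dirichlet_character_eq_0_iff:
  "dirichlet_character q chi \<Longrightarrow> chi n = 0 \<longleftrightarrow> \<not> coprime n q"
  by (simp add: dirichlet_character_def)

lemma dirichlet_character_mod:
  assumes "dirichlet_character q chi"
  shows "chi n = chi (n mod q)"
proof -
  have "chi (r + k * q) = chi r" for r k
  proof (induction k)
    case (Suc k)
    have "chi (r + Suc k * q) = chi ((r + k * q) + q)"
      by (simp add: algebra_simps)
    also have "\<dots> = chi (r + k * q)"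
      using assms by (simp only: dirichlet_character_def)
    finally show ?case
      using Suc by simp
  qed simp
  from this [of "n mod q" "n div q"] show ?thesis
    by (simp add: mod_div_mult_eq)
qed

lemma dirichlet_character_cong:
  "dirichlet_character q chi \<Longrightarrow> [m = n] (mod q) \<Longrightarrow> chi m = chi n"
  by (metis cong_def dirichlet_character_mod)

lemma dirichlet_character_1:
  assumes "dirichlet_character q chi"
  shows "chi 1 = 1"
proof -
  have "chi 1 = chi 1 * chi 1"
    using dirichlet_character_mult [OF assms, of 1 1] by simp
  moreover have "chi 1 \<noteq> 0"
    using dirichlet_character_eq_0_iff [OF assms, of 1] by simp
  ultimately show ?thesis
    by (metis mult_cancel_left1)
qed

lemma dirichlet_character_power:
  "dirichlet_character q chi \<Longrightarrow> chi (n ^ k) = chi n ^ k"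
  by (induction k) (simp_all only: power_0 power_Suc dirichlet_character_1 dirichlet_character_mult)

lemma dirichlet_character_root_of_unity:
  assumes "prime q" "dirichlet_character q chi" "coprime n q"
  shows "chi n ^ (q - 1) = 1"
proof -
  have "\<not> q dvd n"
    using assms by (metis coprime_absorb_left coprime_commute not_prime_unit)
  then have "[n ^ (q - 1) = 1] (mod q)"
    using fermat_theorem assms(1) by blast
  then show ?thesis
    using assms(2) by (metis dirichlet_character_1 dirichlet_character_cong dirichlet_character_power)
qed

lemma norm_dirichlet_character_le_1:
  assumes "prime q" "dirichlet_character q chi"
  shows "norm (chi n) \<le> 1"
proof (cases "coprime n q")
  case True
  have "norm (chi n) ^ (q - 1) = 1"
    using dirichlet_character_root_of_unity [OF assms True] by (metis norm_one norm_power)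
  moreover have "q - 1 > 0"
    using assms prime_gt_1_nat by auto
  ultimately show ?thesis
    using power_eq_iff_eq_base [of "q - 1" "norm (chi n)" 1] by simp
next
  case False
  then show ?thesis
    using dirichlet_character_eq_0_iff [OF assms(2), of n] by simp
qed

lemma dirichlet_character_principal_character:
  "dirichlet_character q (principal_character q)"
  unfolding dirichlet_character_def principal_character_def
proof (intro conjI allI)
  fix n :: nat
  have "coprime (n + q) q = coprime n q"
    by (simp only: coprime_iff_gcd_eq_1 gcd_add1)
  then show "(if coprime (n + q) q then 1 else 0) = (if coprime n q then 1 else (0::complex))"
    by simp
qed simp_all

lemma dirichlet_character_times:
  "dirichlet_character q chi \<Longrightarrow> dirichlet_character q psi \<Longrightarrow>
     dirichlet_character q (\<lambda>n. chi n * psi n)"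
  unfolding dirichlet_character_def by (auto simp: mult_ac)

lemma exists_primroot_odd_prime:
  assumes "prime q" "odd q"
  obtains g where "residue_primroot q g"
proof -
  have "q = q ^ 1 \<and> prime q \<and> odd q \<and> (1::nat) > 0"
    using assms by simp
  then have "q \<in> cyclic_moduli"
    unfolding cyclic_moduli_def by blast
  then show ?thesis
    using residue_primroot_iff_in_cyclic_moduli that by blast
qed

locale primroot_modulus =
  fixes q g :: nat
  assumes prime_q: "prime q" and primroot_g: "residue_primroot q g"
begin

abbreviation characters :: "(nat \<Rightarrow> complex) set" where
  "characters \<equiv> {chi. dirichlet_character q chi}"

lemma q_gt_1: "q > 1"
  using prime_q prime_gt_1_nat by blast

lemma not_dvd_if_coprime: "coprime n q \<Longrightarrow> \<not> q dvd n"
  using prime_q by (metis coprime_absorb_left coprime_commute not_prime_unit)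

lemma coprime_if_less:
  assumes "0 < n" "n < q"
  shows "coprime n q"
proof -
  have "\<not> q dvd n"
    using assms by (auto dest: dvd_imp_le)
  then show ?thesis
    using prime_imp_coprime [OF prime_q] by (simp add: coprime_commute)
qed

lemma mod_in_totatives: "coprime n q \<Longrightarrow> n mod q \<in> {1..<q}"
  using not_dvd_if_coprime q_gt_1 by (simp add: dvd_eq_mod_eq_0 Suc_le_eq)

lemma power_primroot_surj:
  assumes "coprime n q"
  shows "n mod q \<in> (\<lambda>i. g ^ i mod q) ` {..<q - 1}"
proof -
  have "(\<lambda>i. g ^ i mod q) ` {..<q - 1} = totatives q"
    using residue_primroot_is_generator [OF q_gt_1 primroot_g] totient_prime [OF prime_q]
    by (simp add: bij_betw_def)
  moreover have "n mod q \<in> totatives q"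
    using mod_in_totatives [OF assms] assms by (auto simp: in_totatives_iff)
  ultimately show ?thesis
    by simp
qed

definition dlog :: "nat \<Rightarrow> nat" where
  "dlog n = inv_into {..<q - 1} (\<lambda>i. g ^ i mod q) (n mod q)"

lemma dlog_less: "coprime n q \<Longrightarrow> dlog n < q - 1"
  unfolding dlog_def using inv_into_into [OF power_primroot_surj] by blast

lemma power_dlog_mod: "coprime n q \<Longrightarrow> g ^ dlog n mod q = n mod q"
  unfolding dlog_def using f_inv_into_f [OF power_primroot_surj] by blast

lemma dlog_mult_cong:
  assumes "coprime m q" "coprime n q"
  shows "[dlog m + dlog n = dlog (m * n)] (mod (q - 1))"
proof -
  have "g ^ (dlog m + dlog n) mod q = (g ^ dlog m mod q) * (g ^ dlog n mod q) mod q"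
    by (simp add: power_add mod_mult_eq)
  also have "\<dots> = g ^ dlog (m * n) mod q"
    using assms by (simp add: power_dlog_mod mod_mult_eq)
  finally have "[g ^ (dlog m + dlog n) = g ^ dlog (m * n)] (mod q)"
    by (simp add: cong_def)
  moreover have "coprime q g" "ord q g = q - 1"
    using primroot_g totient_prime [OF prime_q] by (auto simp: residue_primroot_def)
  ultimately show ?thesis
    using order_divides_expdiff by metis
qed

definition zeta :: complex where
  "zeta = cis (2 * pi / real (q - 1))"

lemma zeta_power: "zeta ^ k = cis (2 * pi * real k / real (q - 1))"
proof -
  have "zeta ^ k = cis (real k * (2 * pi / real (q - 1)))"
    unfolding zeta_def by (rule Complex.DeMoivre)
  then show ?thesis
    by (simp add: mult.commute)
qed

lemma zeta_power_mod: "zeta ^ k = zeta ^ (k mod (q - 1))"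
proof -
  have "zeta ^ (q - 1) = 1"
    using q_gt_1 by (simp add: zeta_power complex_eq_iff)
  then show ?thesis
    by (metis div_mult_mod_eq power_add power_mult power_one mult_1 mult.commute)
qed

lemma zeta_power_inj: "a < q - 1 \<Longrightarrow> b < q - 1 \<Longrightarrow> zeta ^ a = zeta ^ b \<Longrightarrow> a = b"
proof -
  have "q - 1 > 0"
    using q_gt_1 by simp
  from Complex.bij_betw_roots_unity [OF this]
  have "inj_on (\<lambda>k. cis (2 * pi * real k / real (q - 1))) {..<q - 1}"
    by (simp add: bij_betw_def)
  then show "a < q - 1 \<Longrightarrow> b < q - 1 \<Longrightarrow> zeta ^ a = zeta ^ b \<Longrightarrow> a = b"
    unfolding zeta_power inj_on_def by blast
qed

definition chi_gen :: "nat \<Rightarrow> complex" where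
  "chi_gen n = (if coprime n q then zeta ^ dlog n else 0)"

lemma dirichlet_character_chi_gen: "dirichlet_character q chi_gen"
  unfolding dirichlet_character_def
proof (intro conjI allI)
  fix m n :: nat
  show "chi_gen (m * n) = chi_gen m * chi_gen n"
  proof (cases "coprime m q \<and> coprime n q")
    case True
    then have "zeta ^ (dlog m + dlog n) = zeta ^ dlog (m * n)"
      using dlog_mult_cong zeta_power_mod unfolding cong_def by metis
    with True show ?thesis
      by (simp add: chi_gen_def power_add)
  qed (auto simp: chi_gen_def)
next
  fix n :: nat
  have "coprime (n + q) q = coprime n q"
    by (simp only: coprime_iff_gcd_eq_1 gcd_add1)
  then show "chi_gen (n + q) = chi_gen n"
    by (simp add: chi_gen_def dlog_def)
qed (simp add: chi_gen_def zeta_power)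

lemma inj_on_chi_gen: "inj_on chi_gen {1..<q}"
proof (rule inj_onI)
  fix m n assume m: "m \<in> {1..<q}" and n: "n \<in> {1..<q}" and eq: "chi_gen m = chi_gen n"
  have "coprime m q" "coprime n q"
    using m n coprime_if_less by auto
  with eq have "dlog m = dlog n"
    using zeta_power_inj dlog_less by (simp add: chi_gen_def)
  then have "m mod q = n mod q"
    using power_dlog_mod \<open>coprime m q\<close> \<open>coprime n q\<close> by metis
  with m n show "m = n"
    by simp
qed

lemma chi_gen_neq_1:
  assumes "coprime n q" "\<not> [n = 1] (mod q)"
  shows "chi_gen n \<noteq> 1"
proof
  assume "chi_gen n = 1"
  then have "chi_gen (n mod q) = chi_gen 1"
    using dirichlet_character_chi_gen
    by (metis dirichlet_character_1 dirichlet_character_mod)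
  then have "n mod q = 1"
    using inj_on_chi_gen mod_in_totatives [OF assms(1)] q_gt_1 by (auto simp: inj_on_def)
  with assms(2) q_gt_1 show False
    by (simp add: cong_def)
qed

lemma card_power_cong_1_le:
  assumes "t > 0"
  shows "card {n \<in> {1..<q}. [n ^ t = 1] (mod q)} \<le> t"
proof -
  let ?S = "{n \<in> {1..<q}. [n ^ t = 1] (mod q)}"
  have "chi_gen n ^ t = 1" if "[n ^ t = 1] (mod q)" for n
    using dirichlet_character_cong [OF dirichlet_character_chi_gen that] dirichlet_character_chi_gen
    by (metis dirichlet_character_1 dirichlet_character_power)
  then have "chi_gen ` ?S \<subseteq> {z. z ^ t = 1}"
    by auto
  then have "card ?S \<le> card {z :: complex. z ^ t = 1}"
    using inj_on_chi_gen assms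
    by (intro card_inj_on_le [OF inj_on_subset [of _ "{1..<q}"]] finite_roots_unity) auto
  also have "\<dots> = t"
    using assms by (intro card_roots_unity_eq) simp
  finally show ?thesis .
qed

lemma dirichlet_character_eqI:
  assumes "dirichlet_character q chi" "dirichlet_character q psi" "chi g = psi g"
  shows "chi = psi"
proof
  fix n
  show "chi n = psi n"
  proof (cases "coprime n q")
    case True
    then have "[g ^ dlog n = n] (mod q)"
      using power_dlog_mod by (simp add: cong_def)
    then have "chi n = chi g ^ dlog n" "psi n = psi g ^ dlog n"
      using assms dirichlet_character_cong dirichlet_character_power by metis+
    with assms(3) show ?thesis
      by simp
  next
    case False
    then have "chi n = 0" "psi n = 0"
      using dirichlet_character_eq_0_iff assms(1,2) by blast+
    then show ?thesis
      by simp
  qed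
qed

lemma finite_characters: "finite characters"
  and card_characters_le: "card characters \<le> q - 1"
proof -
  have inj: "inj_on (\<lambda>chi. chi g) characters"
    using dirichlet_character_eqI by (auto simp: inj_on_def)
  have coprime_g: "coprime g q"
    using primroot_g by (simp add: residue_primroot_def coprime_commute)
  have sub: "(\<lambda>chi. chi g) ` characters \<subseteq> {z. z ^ (q - 1) = 1}"
    using dirichlet_character_root_of_unity [OF prime_q _ coprime_g] by auto
  have fin: "finite {z :: complex. z ^ (q - 1) = 1}"
    using q_gt_1 by (intro finite_roots_unity) simp
  show "finite characters"
    using inj_on_finite [OF inj sub fin] .
  have "card characters \<le> card {z :: complex. z ^ (q - 1) = 1}"
    using card_inj_on_le [OF inj sub fin] .
  also have "\<dots> = q - 1"
    using q_gt_1 by (intro card_roots_unity_eq) simp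
  finally show "card characters \<le> q - 1" .
qed

lemma sum_characters_eq_0:
  assumes "coprime n q" "\<not> [n = 1] (mod q)"
  shows "(\<Sum>chi\<in>characters. chi n) = 0"
proof -
  let ?h = "\<lambda>chi k. chi_gen k * chi k"
  have sub: "?h ` characters \<subseteq> characters"
    using dirichlet_character_times [OF dirichlet_character_chi_gen] by auto
  have inj: "inj_on ?h characters"
  proof (rule inj_onI)
    fix chi psi assume chi: "chi \<in> characters" and psi: "psi \<in> characters" and eq: "?h chi = ?h psi"
    show "chi = psi"
    proof
      fix k
      show "chi k = psi k"
      proof (cases "coprime k q")
        case True
        then have "chi_gen k \<noteq> 0"
          using dirichlet_character_chi_gen dirichlet_character_eq_0_iff by blast
        with fun_cong [OF eq, of k] show ?thesis
          by simp
      next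
        case False
        then show ?thesis
          using chi psi dirichlet_character_eq_0_iff [of q chi k] dirichlet_character_eq_0_iff [of q psi k]
          by simp
      qed
    qed
  qed
  have "(\<Sum>chi\<in>characters. chi n) = (\<Sum>chi\<in>?h ` characters. chi n)"
    using endo_inj_surj [OF finite_characters sub inj] by simp
  also have "\<dots> = chi_gen n * (\<Sum>chi\<in>characters. chi n)"
    using sum.reindex [OF inj] by (simp add: sum_distrib_left)
  finally have "(1 - chi_gen n) * (\<Sum>chi\<in>characters. chi n) = 0"
    by (simp add: algebra_simps)
  with chi_gen_neq_1 [OF assms] show ?thesis
    by simp
qed

lemma sum_nonprincipal_characters:
  "(\<Sum>chi\<in>{chi. dirichlet_character q chi \<and> chi \<noteq> principal_character q}. chi n) =
     of_real (if [n = 1] (mod q) then real (card characters) - 1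
              else if coprime n q then -1 else 0)"
proof -
  have "{chi. dirichlet_character q chi \<and> chi \<noteq> principal_character q} =
        characters - {principal_character q}"
    by auto
  then have "(\<Sum>chi\<in>{chi. dirichlet_character q chi \<and> chi \<noteq> principal_character q}. chi n) =
        (\<Sum>chi\<in>characters. chi n) - principal_character q n"
    using finite_characters dirichlet_character_principal_character by (simp add: sum_diff1)
  moreover have "(\<Sum>chi\<in>characters. chi n) = of_nat (card characters)" if cong: "[n = 1] (mod q)"
  proof -
    have "chi n = 1" if "dirichlet_character q chi" for chi
      using dirichlet_character_cong [OF that cong] dirichlet_character_1 [OF that] by simp
    then have "(\<Sum>chi\<in>characters. chi n) = (\<Sum>chi\<in>characters. 1)"
      by (intro sum.cong) auto
    then show ?thesis
      by simp
  qed
  moreover have "coprime n q" if "[n = 1] (mod q)"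
    using that q_gt_1 by (metis cong_def coprime_1_left coprime_mod_left_iff mod_less not_one_less_zero)
  moreover have "(\<Sum>chi\<in>characters. chi n) = 0" if "\<not> coprime n q"
  proof (rule sum.neutral)
    show "\<forall>chi\<in>characters. chi n = 0"
      using that dirichlet_character_eq_0_iff by blast
  qed
  ultimately show ?thesis
    using sum_characters_eq_0 [of n] unfolding principal_character_def
    by (cases "[n = 1] (mod q)"; cases "coprime n q") simp_all
qed

end

lemma sum_power_le_geometric_tail:
  fixes x :: real
  assumes "0 \<le> x" "x < 1"
  shows "(\<Sum>m=b..M. x ^ m) \<le> x ^ b / (1 - x)"
proof (cases "M < b")
  case False
  then have "(\<Sum>m=b..M. x ^ m) = (x ^ b - x ^ Suc M) / (1 - x)"
    using assms by (simp add: sum_gp)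
  also have "\<dots> \<le> x ^ b / (1 - x)"
    using assms by (intro divide_right_mono) auto
  finally show ?thesis .
qed (use assms in simp)

lemma sum_inverse_consecutive_products:
  assumes "a \<ge> 2"
  shows "(\<Sum>p=a..a+N. 1 / (real p * (real p - 1))) = 1 / (real a - 1) - 1 / real (a + N)"
proof (induction N)
  case 0
  from assms show ?case
    by (simp add: field_simps)
next
  case (Suc N)
  define x where "x = real (a + N)"
  have "x > 1"
    using assms x_def by simp
  have "(\<Sum>p=a..a + Suc N. 1 / (real p * (real p - 1))) =
      (\<Sum>p=a..a + N. 1 / (real p * (real p - 1))) + 1 / ((x + 1) * x)"
    by (simp add: x_def)
  also have "\<dots> = 1 / (real a - 1) - (1 / x - 1 / ((x + 1) * x))"
    using Suc by (simp add: x_def)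
  also have "1 / x - 1 / ((x + 1) * x) = 1 / (x + 1)"
  proof -
    have "x \<noteq> 0" "x + 1 \<noteq> 0"
      using \<open>x > 1\<close> by auto
    then have "1 / x - 1 / (x + 1) = 1 / ((x + 1) * x)"
      by (simp add: diff_frac_eq mult.commute)
    then show ?thesis
      by simp
  qed
  also have "x + 1 = real (a + Suc N)"
    by (simp add: x_def)
  finally show ?case .
qed

lemma sum_inverse_consecutive_products_le:
  assumes "a \<ge> 2"
  shows "(\<Sum>p=a..P. 1 / (real p * (real p - 1))) \<le> 1 / (real a - 1)"
proof (cases "P < a")
  case False
  then have "(\<Sum>p=a..P. 1 / (real p * (real p - 1))) = 1 / (real a - 1) - 1 / real P"
    using sum_inverse_consecutive_products [OF assms, of "P - a"] by simp
  then show ?thesis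
    by simp
qed (use assms in simp)

lemma sum_inverse_le_harm:
  "finite S \<Longrightarrow> 0 \<notin> S \<Longrightarrow> (\<Sum>j\<in>S. 1 / real j) \<le> harm (card S)"
proof (induction "card S" arbitrary: S)
  case 0
  then show ?case
    by (simp add: harm_def)
next
  case (Suc n)
  define m where "m = Max S"
  have "S \<noteq> {}"
    using Suc by auto
  then have "m \<in> S"
    using Suc m_def by simp
  have "S \<subseteq> {1..m}"
  proof
    fix x
    assume "x \<in> S"
    moreover have "0 \<notin> S" "finite S"
      using Suc.prems by auto
    ultimately have "x \<noteq> 0" "x \<le> m"
      using m_def by (metis, simp)
    then show "x \<in> {1..m}"
      by simp
  qed
  then have "Suc n \<le> m"
    using Suc.hyps(2) card_mono [of "{1..m}" S] by simp
  have "(\<Sum>j\<in>S. 1 / real j) = 1 / real m + (\<Sum>j\<in>S - {m}. 1 / real j)"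
    using Suc.prems \<open>m \<in> S\<close> by (simp add: sum.remove)
  also have "card (S - {m}) = n"
    using Suc.hyps(2) Suc.prems \<open>m \<in> S\<close> by simp
  then have "(\<Sum>j\<in>S - {m}. 1 / real j) \<le> harm n"
    using Suc.hyps(1) [of "S - {m}"] Suc.prems by simp
  also have "1 / real m \<le> 1 / real (Suc n)"
    using \<open>Suc n \<le> m\<close> by (simp add: frac_le)
  also have "1 / real (Suc n) + harm n = harm (Suc n)"
    by (simp add: harm_Suc inverse_eq_divide)
  finally show ?case
    using Suc.hyps(2) by simp
qed

lemma sum_by_parts_le:
  fixes a B c :: "nat \<Rightarrow> real"
  assumes antimono_c: "\<And>t. 1 \<le> t \<Longrightarrow> c (Suc t) \<le> c t" and nonneg_c: "\<And>t. 0 \<le> c t"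
    and "B 1 = 0"
    and partial_le: "\<And>t. 1 \<le> t \<Longrightarrow> t \<le> T \<Longrightarrow> (\<Sum>s=2..t. a s) \<le> B t"
    and "1 \<le> T"
  shows "(\<Sum>t=2..T. a t * c t) \<le> (\<Sum>t=2..T. (B t - B (t - 1)) * c t)"
proof -
  have step: "(\<Sum>t=2..Suc N. a t * c t) + (B (Suc N) - (\<Sum>s=2..Suc N. a s)) * c (Suc N)
                \<le> (\<Sum>t=2..Suc N. (B t - B (t - 1)) * c t)" if "Suc N \<le> T" for N
    using that
  proof (induction N)
    case 0
    then show ?case
      using \<open>B 1 = 0\<close> by simp
  next
    case (Suc N)
    let ?S = "\<Sum>s=2..Suc N. a s"
    have "?S \<le> B (Suc N)"
      using Suc.prems by (intro partial_le) auto
    then have "(B (Suc N) - ?S) * c (Suc (Suc N)) \<le> (B (Suc N) - ?S) * c (Suc N)"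
      by (intro mult_left_mono antimono_c) auto
    with Suc show ?case
      by (simp add: algebra_simps)
  qed
  obtain N where "T = Suc N"
    using \<open>1 \<le> T\<close> by (cases T) auto
  moreover have "(B T - (\<Sum>s=2..T. a s)) * c T \<ge> 0"
    using partial_le \<open>1 \<le> T\<close> nonneg_c by simp
  ultimately show ?thesis
    using step [of N] by simp
qed

section \<open>The constant \<open>\<A>\<close>\<close>

lemma
  assumes "t \<ge> 2"
  shows alpha_idx_pos: "alpha_idx t \<ge> 1"
    and beta_idx_eq: "beta_idx t = alpha_idx t + t - 1"
    and Suc_beta_idx_pred: "Suc (beta_idx (t - 1)) = alpha_idx t"
    and two_alpha_idx: "2 * alpha_idx t = t * (t - 1)"
proof -
  obtain s where ts: "t = Suc s" and "s \<ge> 1"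
    using assms by (cases t) auto
  obtain e where e: "s * (s + 1) = 2 * e"
    using dvdE [of 2 "s * (s + 1)"] by auto
  with \<open>s \<ge> 1\<close> have "e \<ge> 1"
    by (cases e) auto
  have "t ^ 2 - t = 2 * e" "t ^ 2 + t = 2 * e + 2 * s + 2" "(t - 1) ^ 2 + (t - 1) = 2 * e"
    using e ts by (simp_all add: power2_eq_square algebra_simps)
  then have "alpha_idx t = e" "beta_idx t = e + s" "beta_idx (t - 1) = e - 1"
    by (simp_all add: alpha_idx_def beta_idx_def)
  with e ts \<open>e \<ge> 1\<close> show "alpha_idx t \<ge> 1" "beta_idx t = alpha_idx t + t - 1"
    "Suc (beta_idx (t - 1)) = alpha_idx t" "2 * alpha_idx t = t * (t - 1)"
    by (simp_all add: algebra_simps)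
qed

lemma sum_atLeastAtMost_2_eq_beta_idx:
  assumes "t \<ge> 1"
  shows "(\<Sum>s=2..t. s) = beta_idx t"
proof -
  have "2 * (\<Sum>s=2..t. s) + 2 = t * t + t"
    using assms
  proof (induction t)
    case (Suc t)
    then show ?case
      by (cases "t = 0") (simp_all add: algebra_simps)
  qed simp
  then show ?thesis
    by (simp add: beta_idx_def power2_eq_square)
qed

definition A_term :: "nat \<Rightarrow> real" where
  "A_term t = (1 / real t) * (\<Sum>k = alpha_idx t..beta_idx t. 1 / real k)"

lemma harm_beta_idx_diff:
  assumes "t \<ge> 2"
  shows "(harm (beta_idx t) - harm (beta_idx (t - 1))) * (1 / real t) = A_term t"
proof -
  have "beta_idx (t - 1) \<le> beta_idx t"
    using beta_idx_eq [OF assms] Suc_beta_idx_pred [OF assms] by simp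
  then have "harm (beta_idx t) - harm (beta_idx (t - 1)) = (\<Sum>k = Suc (beta_idx (t - 1))..beta_idx t. 1 / real k)"
    using sum.ub_add_nat [of 1 "beta_idx (t - 1)" "\<lambda>k. inverse (real k)" "beta_idx t - beta_idx (t - 1)"]
    by (simp add: harm_def inverse_eq_divide)
  then show ?thesis
    using Suc_beta_idx_pred [OF assms] by (simp add: A_term_def)
qed

lemma A_term_nonneg: "A_term t \<ge> 0"
  unfolding A_term_def by (intro mult_nonneg_nonneg sum_nonneg) auto

lemma A_term_le:
  assumes "t \<ge> 2"
  shows "A_term t \<le> 2 / (real t * (real t - 1))"
proof -
  have "(\<Sum>k = alpha_idx t..beta_idx t. 1 / real k) \<le> real (card {alpha_idx t..beta_idx t}) * (1 / real (alpha_idx t))"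
    using alpha_idx_pos [OF assms] by (intro sum_bounded_above) (auto simp: frac_le)
  also have "card {alpha_idx t..beta_idx t} = t"
    using assms alpha_idx_pos [OF assms] beta_idx_eq [OF assms] by simp
  finally have "A_term t \<le> 1 / real (alpha_idx t)"
    using assms by (simp add: A_term_def divide_le_eq)
  also have "real (alpha_idx t) = real t * (real t - 1) / 2"
    using arg_cong [OF two_alpha_idx [OF assms], of real] assms by (simp add: of_nat_diff)
  finally show ?thesis
    by simp
qed

lemma sum_A_term_le_2: "(\<Sum>t=2..T. A_term t) \<le> 2"
proof -
  have "(\<Sum>t=2..T. A_term t) \<le> (\<Sum>t=2..T. 2 * (1 / (real t * (real t - 1))))"
    using A_term_le by (intro sum_mono) auto
  also have "\<dots> \<le> 2 * (1 / (real (2::nat) - 1))"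
    unfolding sum_distrib_left [symmetric]
    by (intro mult_left_mono sum_inverse_consecutive_products_le) auto
  finally show ?thesis
    by simp
qed

lemma summable_on_A_term: "A_term summable_on {2..}"
proof (rule nonneg_bdd_above_summable_on)
  show "bdd_above (sum A_term ` {F. F \<subseteq> {2..} \<and> finite F})"
  proof (rule bdd_aboveI2)
    fix F :: "nat set"
    assume "F \<in> {F. F \<subseteq> {2..} \<and> finite F}"
    then have "F \<subseteq> {2..Max F}" "finite F"
      by auto
    then have "sum A_term F \<le> (\<Sum>t=2..Max F. A_term t)"
      using A_term_nonneg by (intro sum_mono2) auto
    also have "\<dots> \<le> 2"
      by (rule sum_A_term_le_2)
    finally show "sum A_term F \<le> 2" .
  qed
qed (rule A_term_nonneg)

lemma sum_A_term_le_const_A: "(\<Sum>t=2..T. A_term t) \<le> const_A"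
proof -
  have "const_A = infsum A_term {2..}"
    unfolding const_A_def A_term_def by simp
  moreover have "(\<Sum>t=2..T. A_term t) \<le> infsum A_term {2..}"
    using summable_on_A_term A_term_nonneg by (intro finite_sum_le_infsum) auto
  ultimately show ?thesis
    by simp
qed

lemma const_A_ge: "const_A \<ge> 3 / 4"
proof -
  have "alpha_idx 2 = 1" "beta_idx 2 = 2"
    by (simp_all add: alpha_idx_def beta_idx_def)
  moreover have "{1..2::nat} = {1, 2}"
    by auto
  ultimately have "A_term 2 = 3 / 4"
    by (simp add: A_term_def)
  then show ?thesis
    using sum_A_term_le_const_A [of 2] by simp
qed

lemma sum_inverse_le_harm_beta_idx:
  fixes F :: "'a set" and mu j :: "'a \<Rightarrow> nat"
  assumes "finite F" "inj_on j F" "\<And>x. x \<in> F \<Longrightarrow> j x \<ge> 1" "\<And>x. x \<in> F \<Longrightarrow> mu x \<ge> 2"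
    and card_level: "\<And>t. card {x \<in> F. mu x = t} \<le> t"
    and "t \<ge> 1"
  shows "(\<Sum>x\<in>{x \<in> F. mu x \<le> t}. 1 / real (j x)) \<le> harm (beta_idx t)"
proof -
  define G where "G = {x \<in> F. mu x \<le> t}"
  have "finite G" "inj_on j G"
    using assms(1,2) by (auto simp: G_def intro: inj_on_subset)
  have "card G \<le> beta_idx t"
  proof -
    have "G = (\<Union>s\<in>{2..t}. {x \<in> F. mu x = s})"
      using assms(4) by (auto simp: G_def)
    then have "card G \<le> (\<Sum>s=2..t. card {x \<in> F. mu x = s})"
      by (simp add: card_UN_le)
    also have "\<dots> \<le> (\<Sum>s=2..t. s)"
      using card_level by (intro sum_mono) auto
    also have "\<dots> = beta_idx t"
      using sum_atLeastAtMost_2_eq_beta_idx [OF \<open>t \<ge> 1\<close>] .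
    finally show ?thesis .
  qed
  have "(\<Sum>x\<in>G. 1 / real (j x)) = (\<Sum>k\<in>j ` G. 1 / real k)"
    using sum.reindex [OF \<open>inj_on j G\<close>, of "\<lambda>k. 1 / real k"] by simp
  also have "\<dots> \<le> harm (card (j ` G))"
    using \<open>finite G\<close> assms(3) by (intro sum_inverse_le_harm) (force simp: G_def)+
  also have "\<dots> \<le> harm (beta_idx t)"
    using \<open>card G \<le> beta_idx t\<close> card_image [OF \<open>inj_on j G\<close>] by (simp add: harm_mono)
  finally show ?thesis
    unfolding G_def .
qed

text \<open>The values \<open>j x\<close> are distinct positive integers, and at most \<open>t\<close> of them
  have \<open>mu x = t\<close>; the sum is largest when these are the integers \<open>alpha_idx t, \<dots>, beta_idx t\<close>,
  which gives \<open>\<A>\<close>. Summation by parts against the partial-sum bound above makes this precise.\<close>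

lemma sum_inverse_mult_le_const_A:
  fixes F :: "'a set" and mu j :: "'a \<Rightarrow> nat"
  assumes "finite F" "inj_on j F" "\<And>x. x \<in> F \<Longrightarrow> j x \<ge> 1" "\<And>x. x \<in> F \<Longrightarrow> mu x \<ge> 2"
    and "\<And>t. card {x \<in> F. mu x = t} \<le> t"
  shows "(\<Sum>x\<in>F. 1 / (real (mu x) * real (j x))) \<le> const_A"
proof (cases "F = {}")
  case True
  then show ?thesis
    using const_A_ge by simp
next
  case False
  define T where "T = Max (mu ` F)"
  have "mu ` F \<subseteq> {2..T}"
    using assms(1,4) by (auto simp: T_def)
  with False have "T \<ge> 2"
    by auto
  define a :: "nat \<Rightarrow> real" where "a t = (\<Sum>x\<in>{x \<in> F. mu x = t}. 1 / real (j x))" for t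
  define B :: "nat \<Rightarrow> real" where "B t = harm (beta_idx t)" for t
  have "(\<Sum>x\<in>F. 1 / (real (mu x) * real (j x))) =
        (\<Sum>t=2..T. \<Sum>x\<in>{x \<in> F. mu x = t}. 1 / (real (mu x) * real (j x)))"
    using sum.group [OF \<open>finite F\<close> _ \<open>mu ` F \<subseteq> {2..T}\<close>, of "\<lambda>x. 1 / (real (mu x) * real (j x))"]
    by simp
  also have "\<dots> = (\<Sum>t=2..T. a t * (1 / real t))"
    unfolding a_def sum_distrib_right by (intro sum.cong refl) auto
  also have "\<dots> \<le> (\<Sum>t=2..T. (B t - B (t - 1)) * (1 / real t))"
  proof (rule sum_by_parts_le)
    show "B 1 = 0"
      by (simp add: B_def beta_idx_def harm_def)
    fix t :: nat
    assume "1 \<le> t"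
    then show "1 / real (Suc t) \<le> 1 / real t"
      by (simp add: frac_le)
    assume "t \<le> T"
    have "(\<Sum>s=2..t. a s) = (\<Sum>x\<in>{x \<in> F. mu x \<le> t}. 1 / real (j x))"
      unfolding a_def using assms(1,4)
      by (subst sum.group [of "{x \<in> F. mu x \<le> t}" "{2..t}" mu, symmetric]) (auto intro!: sum.cong)
    also have "\<dots> \<le> B t"
      unfolding B_def using assms \<open>1 \<le> t\<close> by (rule sum_inverse_le_harm_beta_idx)
    finally show "(\<Sum>s=2..t. a s) \<le> B t" .
  qed (use \<open>T \<ge> 2\<close> in auto)
  also have "\<dots> = (\<Sum>t=2..T. A_term t)"
    unfolding B_def using harm_beta_idx_diff by (intro sum.cong refl) auto
  also have "\<dots> \<le> const_A"
    by (rule sum_A_term_le_const_A)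
  finally show ?thesis .
qed

section \<open>The weights \<open>1 / (m p^m)\<close>\<close>

definition prime_power_pairs :: "(nat \<times> nat) set" where
  "prime_power_pairs = Sigma {p. prime p} (\<lambda>_. {2..})"

definition prime_power_weight :: "nat \<times> nat \<Rightarrow> real" where
  "prime_power_weight x = 1 / (real (snd x) * real (fst x) ^ snd x)"

lemma prime_power_weight_nonneg: "prime_power_weight x \<ge> 0"
  by (simp add: prime_power_weight_def)

lemma sum_prime_power_weight_exponents_le:
  assumes "a \<ge> 2" "b \<ge> 2" "p \<ge> a"
  shows "(\<Sum>m=b..M. prime_power_weight (p, m)) \<le>
           (1 / real b) * (1 / real a) ^ (b - 2) * (1 / (real p * (real p - 1)))"
proof -
  have p2: "real p \<ge> 2"
    using assms by simp
  have "(\<Sum>m=b..M. prime_power_weight (p, m)) \<le> (\<Sum>m=b..M. (1 / real b) * (1 / real p) ^ m)"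
  proof (rule sum_mono)
    fix m
    assume "m \<in> {b..M}"
    then have "real b * real p ^ m \<le> real m * real p ^ m"
      by (intro mult_right_mono) auto
    moreover have "real b * real p ^ m > 0"
      using assms p2 by simp
    ultimately show "prime_power_weight (p, m) \<le> (1 / real b) * (1 / real p) ^ m"
      unfolding prime_power_weight_def by (simp add: frac_le power_one_over)
  qed
  also have "\<dots> \<le> (1 / real b) * ((1 / real p) ^ b / (1 - 1 / real p))"
    unfolding sum_distrib_left [symmetric]
    using p2 by (intro mult_left_mono sum_power_le_geometric_tail) auto
  also have "(1 / real p) ^ b / (1 - 1 / real p) = (1 / real p) ^ (b - 2) * (1 / (real p * (real p - 1)))"
  proof -
    have "b = (b - 2) + 2"
      using assms by simp
    then have "(1 / real p) ^ b = (1 / real p) ^ (b - 2) * (1 / real p) ^ 2"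
      by (metis power_add)
    moreover have "(1 / real p) ^ 2 / (1 - 1 / real p) = 1 / (real p * (real p - 1))"
      using p2 by (simp add: field_simps power2_eq_square)
    ultimately show ?thesis
      by (metis times_divide_eq_right)
  qed
  also have "(1 / real b) * ((1 / real p) ^ (b - 2) * (1 / (real p * (real p - 1))))
      \<le> (1 / real b) * ((1 / real a) ^ (b - 2) * (1 / (real p * (real p - 1))))"
    using assms p2 by (intro mult_left_mono mult_right_mono power_mono) (auto simp: field_simps)
  finally show ?thesis
    by (simp add: mult.assoc)
qed

lemma sum_prime_power_weight_le:
  assumes "a \<ge> 2" "b \<ge> 2" "finite F" "\<And>x. x \<in> F \<Longrightarrow> fst x \<ge> a \<and> snd x \<ge> b"
  shows "(\<Sum>x\<in>F. prime_power_weight x) \<le> (1 / real b) * (1 / real a) ^ (b - 2) * (1 / (real a - 1))"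
proof -
  define P where "P = Max (fst ` F)"
  define M where "M = Max (snd ` F)"
  let ?c = "(1 / real b) * (1 / real a) ^ (b - 2)"
  have "F \<subseteq> {a..P} \<times> {b..M}"
  proof
    fix x
    assume "x \<in> F"
    then have "fst x \<le> P" "snd x \<le> M"
      using assms(3) by (auto simp: P_def M_def)
    with assms(4) [OF \<open>x \<in> F\<close>] show "x \<in> {a..P} \<times> {b..M}"
      by (cases x) auto
  qed
  then have "(\<Sum>x\<in>F. prime_power_weight x) \<le> (\<Sum>x\<in>{a..P} \<times> {b..M}. prime_power_weight x)"
    using prime_power_weight_nonneg by (intro sum_mono2) auto
  also have "\<dots> = (\<Sum>p=a..P. \<Sum>m=b..M. prime_power_weight (p, m))"
    by (simp add: sum.cartesian_product)
  also have "\<dots> \<le> (\<Sum>p=a..P. ?c * (1 / (real p * (real p - 1))))"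
    using sum_prime_power_weight_exponents_le assms(1,2) by (intro sum_mono) auto
  also have "\<dots> \<le> ?c * (1 / (real a - 1))"
    unfolding sum_distrib_left [symmetric]
    using sum_inverse_consecutive_products_le [OF assms(1)] by (intro mult_left_mono) auto
  finally show ?thesis .
qed

lemma sum_prime_power_weight_le_half:
  assumes "finite F" "F \<subseteq> prime_power_pairs"
  shows "sum prime_power_weight F \<le> 1 / 2"
proof -
  have "\<And>x. x \<in> F \<Longrightarrow> fst x \<ge> 2 \<and> snd x \<ge> 2"
    using assms(2) prime_ge_2_nat by (auto simp: prime_power_pairs_def)
  with assms(1) show ?thesis
    using sum_prime_power_weight_le [of 2 2 F] by simp
qed

lemma summable_on_prime_power_weight: "prime_power_weight summable_on prime_power_pairs"
  using sum_prime_power_weight_le_half prime_power_weight_nonneg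
  by (intro nonneg_bdd_above_summable_on bdd_aboveI2 [of _ _ "1 / 2"]) auto

lemma summable_on_dirichlet_prime_powers:
  assumes "prime q" "dirichlet_character q chi"
  shows "(\<lambda>x. chi (fst x ^ snd x) / (of_nat (snd x) * of_nat (fst x ^ snd x))) summable_on prime_power_pairs"
proof (rule abs_summable_summable, rule summable_on_comparison_test [OF summable_on_prime_power_weight])
  fix x :: "nat \<times> nat"
  have "norm (chi (fst x ^ snd x)) / (real (snd x) * real (fst x ^ snd x)) \<le> 1 / (real (snd x) * real (fst x ^ snd x))"
    using norm_dirichlet_character_le_1 [OF assms] by (intro divide_right_mono) auto
  then show "norm (chi (fst x ^ snd x) / (of_nat (snd x) * of_nat (fst x ^ snd x))) \<le> prime_power_weight x"
    by (simp add: prime_power_weight_def norm_divide norm_mult norm_power)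
qed simp

section \<open>Prime powers congruent to \<open>1\<close>\<close>

lemma sum_inverse_squares_le:
  assumes "finite S" "0 \<notin> S"
  shows "(\<Sum>n\<in>S. 1 / real n ^ 2) \<le> pi ^ 2 / 6"
proof -
  let ?g = "\<lambda>n :: nat. 1 / real ((n + 1) ^ 2)"
  have inj: "inj_on (\<lambda>n. n - 1) S"
    using assms(2) by (intro inj_onI) (metis One_nat_def Suc_pred neq0_conv)
  have "(\<Sum>n\<in>S. 1 / real n ^ 2) = (\<Sum>n\<in>S. ?g (n - 1))"
  proof (rule sum.cong [OF refl])
    fix n
    assume "n \<in> S"
    then have "n - 1 + 1 = n"
      using assms(2) by (cases n) auto
    then show "1 / real n ^ 2 = ?g (n - 1)"
      by simp
  qed
  also have "\<dots> = (\<Sum>m\<in>(\<lambda>n. n - 1) ` S. ?g m)"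
    using sum.reindex [OF inj, of ?g] by simp
  also have "\<dots> \<le> suminf ?g"
    using inverse_squares_sums assms(1) by (intro sum_le_suminf) (auto intro: sums_summable)
  also have "suminf ?g = pi ^ 2 / 6"
    using inverse_squares_sums by (rule sums_unique [symmetric])
  finally show ?thesis .
qed

lemma sum_inverse_squares_multiples_le:
  fixes P :: "nat set" and k :: "nat \<Rightarrow> nat"
  assumes "finite P" "inj_on k P" "q \<ge> 1"
    and "\<And>p. p \<in> P \<Longrightarrow> k p \<ge> 1 \<and> real (k p) * real q \<le> real p"
  shows "(\<Sum>p\<in>P. 1 / real p ^ 2) \<le> pi ^ 2 / 6 / real q ^ 2"
proof -
  have "(\<Sum>p\<in>P. 1 / real p ^ 2) \<le> (\<Sum>p\<in>P. (1 / real q ^ 2) * (1 / real (k p) ^ 2))"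
  proof (rule sum_mono)
    fix p
    assume "p \<in> P"
    then have "k p \<ge> 1" "real (k p) * real q \<le> real p"
      using assms(4) by auto
    moreover have "0 < real (k p) * real q"
      using \<open>k p \<ge> 1\<close> assms(3) by simp
    ultimately
    have "1 / real p ^ 2 \<le> 1 / (real (k p) * real q) ^ 2"
      by (intro frac_le power_mono) (use assms(3) in auto)
    then show "1 / real p ^ 2 \<le> (1 / real q ^ 2) * (1 / real (k p) ^ 2)"
      by (simp add: power_mult_distrib mult.commute)
  qed
  also have "\<dots> = (1 / real q ^ 2) * (\<Sum>n\<in>k ` P. 1 / real n ^ 2)"
    using sum.reindex [OF assms(2), of "\<lambda>n. 1 / real n ^ 2"] by (simp add: sum_distrib_left)
  also have "\<dots> \<le> (1 / real q ^ 2) * (pi ^ 2 / 6)"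
    using assms(1,4) by (intro mult_left_mono sum_inverse_squares_le) force+
  finally show ?thesis
    by simp
qed

lemma sum_inverse_squares_cong_1_le:
  assumes "q \<ge> 1" "finite P" "\<And>p. p \<in> P \<Longrightarrow> q < p \<and> q dvd p - 1"
  shows "(\<Sum>p\<in>P. 1 / real p ^ 2) \<le> pi ^ 2 / 6 / real q ^ 2"
proof (rule sum_inverse_squares_multiples_le [where k = "\<lambda>p. (p - 1) div q"])
  show "inj_on (\<lambda>p. (p - 1) div q) P"
  proof (rule inj_onI)
    fix x y
    assume "x \<in> P" "y \<in> P" "(x - 1) div q = (y - 1) div q"
    then have "x - 1 = y - 1" "x > 0" "y > 0"
      using assms(3) by (metis dvd_mult_div_cancel, fastforce+)
    then show "x = y"
      by simp
  qed
  fix p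
  assume "p \<in> P"
  define k where "k = (p - 1) div q"
  have "p - 1 = q * k" "p > q"
    using assms(3) [OF \<open>p \<in> P\<close>] by (auto simp: k_def)
  then have "1 \<le> k" "k * q \<le> p"
    using \<open>q \<ge> 1\<close> by (cases k; simp add: mult.commute)+
  then show "1 \<le> k \<and> real k * real q \<le> real p"
    by (metis of_nat_le_iff of_nat_mult)
qed fact+

lemma sum_inverse_squares_cong_minus_1_le:
  assumes "q \<ge> 1" "finite P" "\<And>p. p \<in> P \<Longrightarrow> q < p \<and> q dvd p + 1"
  shows "(\<Sum>p\<in>P. 1 / real p ^ 2) \<le> pi ^ 2 / 6 / real q ^ 2"
proof (rule sum_inverse_squares_multiples_le [where k = "\<lambda>p. (p + 1) div q - 1"])
  have dvd: "p + 1 = q * ((p + 1) div q)" and ge_2: "(p + 1) div q \<ge> 2" if "p \<in> P" for p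
  proof -
    show "p + 1 = q * ((p + 1) div q)"
      using assms(3) [OF that] by simp
    with assms(3) [OF that] have "q * 1 < q * ((p + 1) div q)"
      by simp
    then show "(p + 1) div q \<ge> 2"
      by simp
  qed
  show "inj_on (\<lambda>p. (p + 1) div q - 1) P"
  proof (rule inj_onI)
    fix x y
    assume xy: "x \<in> P" "y \<in> P" "(x + 1) div q - 1 = (y + 1) div q - 1"
    then have "(x + 1) div q = (y + 1) div q"
      using ge_2 [of x] ge_2 [of y] by simp
    then show "x = y"
      using dvd [OF xy(1)] dvd [OF xy(2)] by simp
  qed
  fix p
  assume "p \<in> P"
  define l where "l = (p + 1) div q"
  have "p + 1 = q * l" "l \<ge> 2"
    using dvd [OF \<open>p \<in> P\<close>] ge_2 [OF \<open>p \<in> P\<close>] by (simp_all add: l_def)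
  moreover have "(l - 1) * q = q * l - q"
    by (simp add: algebra_simps)
  ultimately have "1 \<le> l - 1" "(l - 1) * q \<le> p"
    using \<open>q \<ge> 1\<close> by simp_all
  then show "1 \<le> (p + 1) div q - 1 \<and> real ((p + 1) div q - 1) * real q \<le> real p"
    unfolding l_def by (metis of_nat_le_iff of_nat_mult)
qed fact+

lemma sum_weight_squares_cong_1_le:
  assumes "prime q" "finite E"
    and E: "\<And>x. x \<in> E \<Longrightarrow> prime (fst x) \<and> fst x > q \<and> snd x = 2 \<and> [fst x ^ snd x = 1] (mod q)"
  shows "(\<Sum>x\<in>E. prime_power_weight x) \<le> pi ^ 2 / 6 / real q ^ 2"
proof -
  have "q \<ge> 1"
    using assms(1) prime_ge_1_nat by blast
  have pm1: "q dvd p - 1 \<or> q dvd p + 1" if "p \<in> fst ` E" for p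
  proof -
    from that obtain x where x: "x \<in> E" "p = fst x"
      by blast
    then have "p \<ge> 1" "[p ^ 2 = 1] (mod q)"
      using E [OF x(1)] prime_ge_1_nat by auto
    then have "q dvd (p - 1) * (p + 1)"
      using cong_altdef_nat [of 1 "p ^ 2" q] by (simp add: power2_eq_square algebra_simps)
    then show ?thesis
      using prime_dvd_mult_iff [OF assms(1)] by blast
  qed
  define Pa where "Pa = {p \<in> fst ` E. q dvd p - 1}"
  define Pb where "Pb = {p \<in> fst ` E. \<not> q dvd p - 1}"
  have "inj_on fst E" "fst ` E = Pa \<union> Pb"
    using E by (auto simp: inj_on_def prod_eq_iff Pa_def Pb_def)
  have "(\<Sum>x\<in>E. prime_power_weight x) = (\<Sum>x\<in>E. (1 / 2) * (1 / real (fst x) ^ 2))"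
    using E by (intro sum.cong) (auto simp: prime_power_weight_def)
  also have "\<dots> = (\<Sum>p\<in>Pa \<union> Pb. (1 / 2) * (1 / real p ^ 2))"
    using sum.reindex [OF \<open>inj_on fst E\<close>, of "\<lambda>p. (1 / 2) * (1 / real p ^ 2)"] \<open>fst ` E = Pa \<union> Pb\<close>
    by simp
  also have "\<dots> = (1 / 2) * (\<Sum>p\<in>Pa. 1 / real p ^ 2) + (1 / 2) * (\<Sum>p\<in>Pb. 1 / real p ^ 2)"
    using assms(2) by (simp add: sum.union_disjoint sum_distrib_left Pa_def Pb_def disjoint_iff)
  moreover have "(\<Sum>p\<in>Pa. 1 / real p ^ 2) \<le> pi ^ 2 / 6 / real q ^ 2"
    using \<open>q \<ge> 1\<close> assms(2) E by (intro sum_inverse_squares_cong_1_le) (auto simp: Pa_def)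
  moreover have "(\<Sum>p\<in>Pb. 1 / real p ^ 2) \<le> pi ^ 2 / 6 / real q ^ 2"
    using \<open>q \<ge> 1\<close> assms(2) E pm1 by (intro sum_inverse_squares_cong_minus_1_le) (auto simp: Pb_def)
  ultimately show ?thesis
    by linarith
qed

lemma sum_weight_cubes_le:
  assumes "q \<ge> 2" "finite E" "\<And>x. x \<in> E \<Longrightarrow> fst x > q \<and> snd x \<ge> 3"
  shows "(\<Sum>x\<in>E. prime_power_weight x) \<le> 1 / (3 * real q ^ 2)"
proof -
  have "(\<Sum>x\<in>E. prime_power_weight x) \<le> (1 / real (3::nat)) * (1 / real (q + 1)) ^ (3 - 2) * (1 / (real (q + 1) - 1))"
    using assms by (intro sum_prime_power_weight_le) (fastforce dest: assms(3))+
  also have "\<dots> \<le> 1 / (3 * real q * real q)"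
    using assms(1) by (simp add: frac_le)
  finally show ?thesis
    by (simp add: power2_eq_square mult.assoc)
qed

lemma summable_on_prime_power_weight_subset:
  "A \<subseteq> prime_power_pairs \<Longrightarrow> prime_power_weight summable_on A"
  using summable_on_subset_banach summable_on_prime_power_weight by blast

lemma infsum_prime_power_weight_le_half:
  assumes "A \<subseteq> prime_power_pairs"
  shows "infsum prime_power_weight A \<le> 1 / 2"
  using assms summable_on_prime_power_weight_subset [OF assms]
  by (intro infsum_le_finite_sums sum_prime_power_weight_le_half) auto

definition prime_powers_cong_1 :: "nat \<Rightarrow> (nat \<times> nat) set" where
  "prime_powers_cong_1 q = {x \<in> prime_power_pairs. [fst x ^ snd x = 1] (mod q)}"

definition prime_powers_coprime_not_cong_1 :: "nat \<Rightarrow> (nat \<times> nat) set" where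
  "prime_powers_coprime_not_cong_1 q =
     {x \<in> prime_power_pairs. coprime (fst x ^ snd x) q \<and> \<not> [fst x ^ snd x = 1] (mod q)}"

lemma power_cong_1_eq:
  fixes n q :: nat
  assumes "[n = 1] (mod q)" "n \<ge> 2"
  shows "n = q * ((n - 1) div q) + 1" "(n - 1) div q \<ge> 1"
proof -
  have "q dvd n - 1"
    using assms cong_altdef_nat [of 1 n q] by simp
  then show "n = q * ((n - 1) div q) + 1"
    using assms(2) by simp
  with assms(2) show "(n - 1) div q \<ge> 1"
    by (cases "(n - 1) div q") auto
qed

lemma prime_power_weight_le:
  assumes "p ^ m = q * j + 1" "m > 0" "j > 0" "q > 0"
  shows "prime_power_weight (p, m) \<le> (1 / real q) * (1 / (real m * real j))"
proof -
  have "real p ^ m = real q * real j + 1"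
    using assms(1) by (metis of_nat_add of_nat_mult of_nat_power of_nat_1)
  then have "real m * (real q * real j) \<le> real m * real p ^ m"
    by (intro mult_left_mono) auto
  then have "prime_power_weight (p, m) \<le> 1 / (real m * (real q * real j))"
    unfolding prime_power_weight_def using assms(2-4) by (intro frac_le) auto
  then show ?thesis
    by (simp add: mult.left_commute)
qed

context primroot_modulus
begin

lemma card_exponent_level_le:
  assumes "\<And>x. x \<in> E \<Longrightarrow> fst x \<in> {1..<q} \<and> snd x \<ge> 1 \<and> [fst x ^ snd x = 1] (mod q)"
  shows "card {x \<in> E. snd x = t} \<le> t"
proof (cases "t = 0")
  case True
  then have empty: "{x \<in> E. snd x = t} = {}"
    using assms by fastforce
  show ?thesis
    by (simp only: empty card.empty le0)
next
  case False
  have "inj_on fst {x \<in> E. snd x = t}"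
    by (auto simp: inj_on_def prod_eq_iff)
  moreover have "fst ` {x \<in> E. snd x = t} \<subseteq> {n \<in> {1..<q}. [n ^ t = 1] (mod q)}"
    using assms by fastforce
  ultimately have "card {x \<in> E. snd x = t} \<le> card {n \<in> {1..<q}. [n ^ t = 1] (mod q)}"
    by (intro card_inj_on_le) auto
  also have "\<dots> \<le> t"
    using False by (intro card_power_cong_1_le) simp
  finally show ?thesis .
qed

lemma sum_weight_small_primes_cong_1_le:
  assumes "finite E"
    and E: "\<And>x. x \<in> E \<Longrightarrow> prime (fst x) \<and> fst x < q \<and> snd x \<ge> 2 \<and> [fst x ^ snd x = 1] (mod q)"
  shows "(\<Sum>x\<in>E. prime_power_weight x) \<le> const_A / real q"
proof -
  define j where "j x = (fst x ^ snd x - 1) div q" for x :: "nat \<times> nat"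
  have power_eq: "fst x ^ snd x = q * j x + 1" and j_pos: "j x \<ge> 1" if "x \<in> E" for x
  proof -
    have "fst x \<ge> 2" "snd x \<ge> 1"
      using E [OF that] prime_ge_2_nat by auto
    then have "fst x ^ snd x \<ge> 2"
      by (metis order.trans power_increasing power_one_right one_le_numeral)
    then show "fst x ^ snd x = q * j x + 1" "j x \<ge> 1"
      using E [OF that] power_cong_1_eq unfolding j_def by blast+
  qed
  have "inj_on j E"
  proof (rule inj_onI)
    fix x y
    assume "x \<in> E" "y \<in> E" "j x = j y"
    then have "fst x ^ snd x = fst y ^ snd y"
      using power_eq by metis
    with E [OF \<open>x \<in> E\<close>] E [OF \<open>y \<in> E\<close>] show "x = y"
      using prime_power_inj' [of "fst x" "fst y" "snd x" "snd y"] by (simp add: prod_eq_iff)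
  qed
  have card_level: "card {x \<in> E. snd x = t} \<le> t" for t
    using E prime_ge_1_nat by (intro card_exponent_level_le) force
  have "(\<Sum>x\<in>E. prime_power_weight x) \<le> (\<Sum>x\<in>E. (1 / real q) * (1 / (real (snd x) * real (j x))))"
  proof (rule sum_mono)
    fix x
    assume "x \<in> E"
    then show "prime_power_weight x \<le> (1 / real q) * (1 / (real (snd x) * real (j x)))"
      using prime_power_weight_le [of "fst x" "snd x" q "j x"] power_eq [OF \<open>x \<in> E\<close>]
        j_pos [OF \<open>x \<in> E\<close>] E [OF \<open>x \<in> E\<close>] q_gt_1 by simp
  qed
  also have "\<dots> = (1 / real q) * (\<Sum>x\<in>E. 1 / (real (snd x) * real (j x)))"
    by (rule sum_distrib_left [symmetric])
  also have "\<dots> \<le> (1 / real q) * const_A"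
    using sum_inverse_mult_le_const_A [OF assms(1) \<open>inj_on j E\<close> j_pos _ card_level] E
    by (intro mult_left_mono) auto
  finally show ?thesis
    by simp
qed

lemma prime_power_cong_1_neq:
  "m \<ge> 1 \<Longrightarrow> [p ^ m = 1] (mod q) \<Longrightarrow> p \<noteq> q"
  using q_gt_1 by (auto simp: cong_def)

lemma infsum_weight_cong_1_le:
  "infsum prime_power_weight (prime_powers_cong_1 q)
     \<le> const_A / real q + pi ^ 2 / 6 / real q ^ 2 + 1 / (3 * real q ^ 2)"
proof (rule infsum_le_finite_sums)
  show "prime_power_weight summable_on prime_powers_cong_1 q"
    by (rule summable_on_prime_power_weight_subset) (auto simp: prime_powers_cong_1_def)
  fix E
  assume "finite E" "E \<subseteq> prime_powers_cong_1 q"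
  then have E: "prime (fst x) \<and> snd x \<ge> 2 \<and> [fst x ^ snd x = 1] (mod q)" if "x \<in> E" for x
    using that by (auto simp: prime_powers_cong_1_def prime_power_pairs_def)
  define E1 where "E1 = {x \<in> E. fst x < q}"
  define E2 where "E2 = {x \<in> E. fst x > q \<and> snd x = 2}"
  define E3 where "E3 = {x \<in> E. fst x > q \<and> snd x \<ge> 3}"
  have "E = E1 \<union> (E2 \<union> E3)"
  proof
    show "E \<subseteq> E1 \<union> (E2 \<union> E3)"
    proof
      fix x
      assume "x \<in> E"
      then have "fst x \<noteq> q" "snd x \<ge> 2"
        using E [OF \<open>x \<in> E\<close>] prime_power_cong_1_neq [of "snd x" "fst x"] by auto
      with \<open>x \<in> E\<close> show "x \<in> E1 \<union> (E2 \<union> E3)"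
        by (auto simp: E1_def E2_def E3_def)
    qed
  qed (auto simp: E1_def E2_def E3_def)
  moreover have "finite E1" "finite E2" "finite E3"
    using \<open>finite E\<close> by (simp_all add: E1_def E2_def E3_def)
  moreover have "E1 \<inter> (E2 \<union> E3) = {}" "E2 \<inter> E3 = {}"
    by (auto simp: E1_def E2_def E3_def)
  ultimately have "sum prime_power_weight E =
      sum prime_power_weight E1 + (sum prime_power_weight E2 + sum prime_power_weight E3)"
    by (simp add: sum.union_disjoint)
  moreover have "sum prime_power_weight E1 \<le> const_A / real q"
    using \<open>finite E1\<close> E by (intro sum_weight_small_primes_cong_1_le) (auto simp: E1_def)
  moreover have "sum prime_power_weight E2 \<le> pi ^ 2 / 6 / real q ^ 2"
    using \<open>finite E2\<close> E prime_q by (intro sum_weight_squares_cong_1_le) (auto simp: E2_def)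
  moreover have "sum prime_power_weight E3 \<le> 1 / (3 * real q ^ 2)"
    using \<open>finite E3\<close> q_gt_1 by (intro sum_weight_cubes_le) (auto simp: E3_def)
  ultimately show "sum prime_power_weight E \<le> const_A / real q + pi ^ 2 / 6 / real q ^ 2 + 1 / (3 * real q ^ 2)"
    by simp
qed

end

section \<open>Orthogonality applied to \<open>\<Sigma>\<^sub>2\<close>\<close>

lemma has_sum_sum:
  fixes f :: "'i \<Rightarrow> 'a \<Rightarrow> 'b :: topological_comm_monoid_add"
  assumes "finite I" "\<And>i. i \<in> I \<Longrightarrow> (f i has_sum s i) A"
  shows "((\<lambda>x. \<Sum>i\<in>I. f i x) has_sum (\<Sum>i\<in>I. s i)) A"
  using assms by (induction I rule: finite_induct) (simp_all add: has_sum_add)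

lemma has_sum_restrict:
  fixes f :: "'a \<Rightarrow> 'b :: {comm_monoid_add, topological_space}"
  assumes "(f has_sum s) B" "B \<subseteq> A"
  shows "((\<lambda>x. if x \<in> B then f x else 0) has_sum s) A"
  using assms by (subst has_sum_cong_neutral [where T = B]) auto

context primroot_modulus
begin

lemma Sigma2_eq:
  "Sigma2 q = of_real ((real (card characters) - 1) * infsum prime_power_weight (prime_powers_cong_1 q)
                       - infsum prime_power_weight (prime_powers_coprime_not_cong_1 q))"
proof -
  let ?X = "{chi. dirichlet_character q chi \<and> chi \<noteq> principal_character q}"
  let ?N = "real (card characters) - 1"
  let ?A = "prime_powers_cong_1 q" and ?B = "prime_powers_coprime_not_cong_1 q"
  define f :: "(nat \<Rightarrow> complex) \<Rightarrow> nat \<times> nat \<Rightarrow> complex"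
    where "f chi x = chi (fst x ^ snd x) / (of_nat (snd x) * of_nat (fst x ^ snd x))" for chi x
  define h where "h x = ?N * (if x \<in> ?A then prime_power_weight x else 0)
                        + - (if x \<in> ?B then prime_power_weight x else 0)" for x
  have "finite ?X"
    using finite_characters by (rule rev_finite_subset) auto
  have summable: "f chi summable_on prime_power_pairs" if "chi \<in> ?X" for chi
    unfolding f_def using that summable_on_dirichlet_prime_powers [OF prime_q] by blast
  have "Sigma2 q = (\<Sum>chi\<in>?X. infsum (f chi) prime_power_pairs)"
    unfolding Sigma2_def
  proof (intro sum.cong refl)
    fix chi
    assume "chi \<in> ?X"
    with summable have "f chi summable_on Sigma {p. prime p} (\<lambda>_. {2..})"
      by (simp add: prime_power_pairs_def)
    from infsum_Sigma_banach [OF this]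
    show "(\<Sum>\<^sub>\<infinity>p\<in>{p. prime p}. \<Sum>\<^sub>\<infinity>m\<in>{2..}. chi (p ^ m) / (of_nat m * of_nat (p ^ m))) =
          infsum (f chi) prime_power_pairs"
      by (simp add: f_def prime_power_pairs_def)
  qed
  moreover have "((\<lambda>x. \<Sum>chi\<in>?X. f chi x) has_sum (\<Sum>chi\<in>?X. infsum (f chi) prime_power_pairs))
                   prime_power_pairs"
    using \<open>finite ?X\<close> summable by (intro has_sum_sum) auto
  moreover have "(\<Sum>chi\<in>?X. f chi x) = of_real (h x)" if "x \<in> prime_power_pairs" for x
    using that unfolding f_def h_def sum_divide_distrib [symmetric] sum_nonprincipal_characters
    by (auto simp: prime_powers_cong_1_def prime_powers_coprime_not_cong_1_def prime_power_weight_def)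
  moreover have "(h has_sum (?N * infsum prime_power_weight ?A + - infsum prime_power_weight ?B)) prime_power_pairs"
  proof -
    have "?A \<subseteq> prime_power_pairs" "?B \<subseteq> prime_power_pairs"
      by (auto simp: prime_powers_cong_1_def prime_powers_coprime_not_cong_1_def)
    then show ?thesis
      unfolding h_def
      by (intro has_sum_add has_sum_cmult_right has_sum_uminus [THEN iffD2] has_sum_restrict
                has_sum_infsum) (simp_all add: summable_on_prime_power_weight_subset)
  qed
  ultimately show ?thesis
    by (metis (no_types, lifting) has_sum_cong has_sum_of_real has_sum_unique diff_conv_add_uminus)
qed

end

lemma abs_diff_lt_bound:
  fixes Q A P c S T :: real
  assumes "Q \<ge> 3" "A \<ge> 3 / 4" "P > 0" "0 \<le> c" "c \<le> Q - 2"
    and "0 \<le> S" "S \<le> A / Q + P / Q ^ 2 + 1 / (3 * Q ^ 2)" and "0 \<le> T" "T \<le> 1 / 2"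
  shows "\<bar>c * S - T\<bar> < A + (P - A) / Q"
proof -
  have "Q > 0"
    using assms(1) by simp
  have "c * S \<le> (Q - 2) * (A / Q + P / Q ^ 2 + 1 / (3 * Q ^ 2))"
    using assms by (intro mult_mono) auto
  also have "\<dots> = A - 2 * A / Q + (Q - 2) / Q * ((P + 1 / 3) / Q)"
    using \<open>Q > 0\<close> by (simp add: field_simps power2_eq_square)
  also have "(Q - 2) / Q * ((P + 1 / 3) / Q) \<le> (P + 1 / 3) / Q"
    using assms(1,3) by (intro mult_left_le_one_le) auto
  also have "A - 2 * A / Q + (P + 1 / 3) / Q < A + (P - A) / Q"
    using assms(2) \<open>Q > 0\<close> by (simp add: field_simps)
  finally have "c * S < A + (P - A) / Q"
    by simp
  moreover have "T < A + (P - A) / Q"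
  proof -
    have "A + (P - A) / Q = A * (1 - 1 / Q) + P / Q"
      using \<open>Q > 0\<close> by (simp add: field_simps)
    moreover have "A * (1 - 1 / Q) \<ge> (3 / 4) * (2 / 3)"
      using assms(1,2) by (intro mult_mono) (auto simp: field_simps)
    moreover have "P / Q > 0"
      using assms(3) \<open>Q > 0\<close> by simp
    ultimately show ?thesis
      using assms(9) by linarith
  qed
  moreover have "0 \<le> c * S"
    using assms(4,6) by simp
  ultimately show ?thesis
    unfolding abs_less_iff using assms(8) by linarith
qed

theorem mainTheorem6:
  fixes q :: nat
  assumes "prime q" and "odd q"
  shows "cmod (Sigma2 q) < const_A + (pi^2 / 6 - const_A) / real q"
proof -
  obtain g where "residue_primroot q g"
    using exists_primroot_odd_prime assms by blast
  interpret primroot_modulus q g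
    using assms(1) \<open>residue_primroot q g\<close> by unfold_locales
  have "q \<ge> 3"
    using assms prime_ge_2_nat [of q] by (cases "q = 2") auto
  have "principal_character q \<in> characters"
    using dirichlet_character_principal_character by simp
  then have "1 \<le> card characters"
    using finite_characters by (metis One_nat_def card_gt_0_iff empty_iff Suc_leI)
  then have "0 \<le> real (card characters) - 1" "real (card characters) - 1 \<le> real q - 2"
    using card_characters_le \<open>q \<ge> 3\<close> by (simp_all add: of_nat_diff)
  moreover have "prime_powers_coprime_not_cong_1 q \<subseteq> prime_power_pairs"
    by (auto simp: prime_powers_coprime_not_cong_1_def)
  ultimately show ?thesis
    unfolding Sigma2_eq norm_of_real
    using const_A_ge infsum_weight_cong_1_le infsum_prime_power_weight_le_half \<open>q \<ge> 3\<close>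
    by (intro abs_diff_lt_bound infsum_nonneg prime_power_weight_nonneg) auto
qed

end
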